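(* Let Assumptions 1 and 2 hold. For every $\eta>0$, every horizon $T\ge 1$ and every sequence of payoff vectors $u_1,\dots,u_T\in\mathbb{R}^N$ with $\|u_t\|_\infty\le u_{\max}$, the regret of the SSA with parameter $\eta$ satisfies $$R^T_{SSA}\le \eta\,\varphi_1(0)+\frac{L}{2\eta}\,T\,u_{\max}^2 ,$$ where $\varphi_1(0)=\mathbb{E}[\max_{i\in A}\epsilon_i]$. Moreover, if $\varphi_1(0)>0$ and $\eta=\sqrt{\frac{L T u_{\max}^2}{2\varphi_1(0)}}$, then $$R^T_{SSA}\le u_{\max}\sqrt{2\,\varphi_1(0)\,L\,T}.$$
   Context: Let $N\ge 2$, $A=\{1,\dots,N\}$, and $\Delta_N=\{x\in\mathbb{R}^N: x_i\ge 0,\ \sum_i x_i=1\}$. Let $\epsilon=(\epsilon_1,\dots,\epsilon_N)$ be a random vector satisfying Assumption 1: each $\epsilon_i$ is integrable with $\mathbb{E}[\epsilon_i]=0$, and the law of $\epsilon$ is absolutely continuous with respect to Lebesgue measure on $\mathbb{R}^N$ with support all of $\mathbb{R}^N$. For $\eta>0$ the social surplus function is $\varphi_\eta(\theta)=\mathbb{E}[\max_{j\in A}(\theta_j+\eta\epsilon_j)]$, $\theta\in\mathbb{R}^N$; thus $\varphi_\eta(\theta)=\eta\varphi_1(\theta/\eta)$. $\varphi_\eta$ is convex and differentiable with $\nabla\varphi_\eta(\theta)\in\Delta_N$. Assumption 2: $\varphi_1$ is twice continuously differentiable and there is a constant $L>0$ with $2\,\mathrm{tr}(\nabla^2\varphi_1(\theta))\le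 L$ for all $\theta\in\mathbb{R}^N$. Online decision problem: payoff vectors $u_1,\dots,u_T\in\mathbb{R}^N$ are arbitrary (possibly adversarial, possibly depending on past choices); set $\theta_0=0$ and $\theta_t=\sum_{s=1}^t u_s$. The regret of a sequence $x_1,\dots,x_T\in\Delta_N$ is $R^T=\max_{x\in\Delta_N}\langle\theta_T,x\rangle-\sum_{t=1}^T\langle u_t,x_t\rangle$. The Social Surplus Algorithm (SSA) with parameter $\eta$ chooses $x_t=\nabla\varphi_\eta(\theta_{t-1})$ for $t=1,\dots,T$; $R^T_{SSA}$ is its regret. *)

theory Defs
  imports "HOL-Probability.Probability"
begin

definition prob_simplex :: "(real^'n) set" where
  "prob_simplex = {x. (\<forall>i. 0 \<le> x $ i) \<and> (\<Sum>i\<in>UNIV. x $ i) = 1}"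

text \<open>Social surplus function phi_eta(theta) = E[max_j (theta_j + eta * eps_j)],
  where P is the law of the random vector eps.\<close>
definition surplus :: "(real^'n) measure \<Rightarrow> real \<Rightarrow> real^'n \<Rightarrow> real" where
  "surplus P \<eta> \<theta> = (\<integral>e. Max (range (\<lambda>j. \<theta> $ j + \<eta> * e $ j)) \<partial>P)"

definition cumpay :: "(nat \<Rightarrow> real^'n) \<Rightarrow> nat \<Rightarrow> real^'n" where
  "cumpay u t = (\<Sum>s=1..t. u s)"

definition regret :: "(nat \<Rightarrow> real^'n) \<Rightarrow> (nat \<Rightarrow> real^'n) \<Rightarrow> nat \<Rightarrow> real" where
  "regret u x T = (SUP y\<in>prob_simplex. cumpay u T \<bullet> y) - (\<Sum>t=1..T. u t \<bullet> x t)"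

definition assumption1 :: "(real^'n) measure \<Rightarrow> bool" where
  "assumption1 P \<longleftrightarrow> prob_space P \<and> sets P = sets borel \<and>
     (\<forall>i. integrable P (\<lambda>e. e $ i) \<and> (\<integral>e. e $ i \<partial>P) = 0) \<and>
     absolutely_continuous lborel P \<and>
     (\<forall>U. open U \<and> U \<noteq> {} \<longrightarrow> emeasure P U > 0)"

definition assumption2 :: "(real^'n) measure \<Rightarrow> real \<Rightarrow> bool" where
  "assumption2 P L \<longleftrightarrow> L > 0 \<and>
     (\<exists>g H. (\<forall>\<theta>. GDERIV (surplus P 1) \<theta> :> g \<theta>) \<and>
            (\<forall>\<theta>. (g has_derivative (\<lambda>h. H \<theta> *v h)) (at \<theta>)) \<and>
            continuous_on UNIV H \<and>
            (\<forall>\<theta>. 2 * trace (H \<theta>) \<le> L))"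

end

theory Submission imports Defs begin

text \<open>
  Since an expected maximum dominates the maximum of expectations, the best fixed choice
  earns at most \<open>\<phi>\<^sub>\<eta>(\<theta>\<^sub>T) = \<eta> \<phi>\<^sub>1(0) + \<Sum>\<^sub>t (\<phi>\<^sub>\<eta>(\<theta>\<^sub>t) - \<phi>\<^sub>\<eta>(\<theta>\<^sub>t\<^sub>-\<^sub>1))\<close>. SSA plays
  \<open>x\<^sub>t = \<nabla>\<phi>\<^sub>\<eta>(\<theta>\<^sub>t\<^sub>-\<^sub>1)\<close>, so each increment exceeds the payoff \<open>\<langle>u\<^sub>t, x\<^sub>t\<rangle>\<close> only by a
  second-order Taylor remainder, which after rescaling to \<open>\<phi>\<^sub>1\<close> is at most
  \<open>sup v\<^sup>T \<nabla>\<^sup>2\<phi>\<^sub>1 v / (2\<eta>)\<close> with \<open>v = u\<^sub>t\<close>. The Hessian of \<open>\<phi>\<^sub>1\<close> has zero column sums,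
  because \<open>\<phi>\<^sub>1\<close> commutes with adding a constant to all coordinates, and nonpositive
  off-diagonal entries, because the maximum is submodular; for such a matrix
  \<open>v\<^sup>T A v \<le> 2 \<parallel>v\<parallel>\<^sub>\<infinity>\<^sup>2 tr A\<close>. Summing over the rounds gives the regret bound, and the
  stated \<open>\<eta>\<close> balances its two terms.
\<close>

lemma Max_range_vec_add_const:
  "Max (range (($) (y + (\<chi> i. t)))) = Max (range (($) y)) + (t :: real)"
  using Max_add_commute[of UNIV "($) y" t] by simp

lemma Max_range_vec_scaleR:
  fixes y :: "real^'n"
  assumes "c > 0"
  shows "Max (range (($) (c *\<^sub>R y))) = c * Max (range (($) y))"
proof -
  have "c * Max (range (($) y)) = Max ((*) c ` range (($) y))"
    by (rule mono_Max_commute) (use assms in \<open>auto simp: mono_def\<close>)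
  then show ?thesis by (simp add: image_image)
qed

lemma abs_Max_range_le_sum:
  fixes f :: "'n::finite \<Rightarrow> real"
  shows "\<bar>Max (range f)\<bar> \<le> (\<Sum>j\<in>UNIV. \<bar>f j\<bar>)"
proof -
  have "Max (range f) \<in> range f" by (rule Max_in) auto
  then obtain k where "Max (range f) = f k" by blast
  moreover have "\<bar>f k\<bar> \<le> (\<Sum>j\<in>UNIV. \<bar>f j\<bar>)" by (rule member_le_sum) auto
  ultimately show ?thesis by simp
qed

lemma Max_range_vec_submodular:
  fixes y :: "real^'n"
  assumes "i \<noteq> j" "a \<ge> 0" "b \<ge> 0"
  shows "Max (range (($) (y + axis i a + axis j b))) + Max (range (($) y))
     \<le> Max (range (($) (y + axis i a))) + Max (range (($) (y + axis j b)))"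
proof -
  let ?M = "\<lambda>z :: real^'n. Max (range (($) z))"
  have le_M: "z $ k \<le> ?M z" for z k by (simp add: Max_ge)
  have "?M (y + axis i a + axis j b) \<in> range (($) (y + axis i a + axis j b))"
    by (rule Max_in) auto
  then obtain k where k: "?M (y + axis i a + axis j b) = y $ k + axis i a $ k + axis j b $ k"
    by (metis rangeE vector_add_component)
  have "?M y \<in> range (($) y)" by (rule Max_in) auto
  then obtain m where m: "?M y = y $ m" by (metis rangeE)
  have "y $ m \<le> (y + axis i a) $ m" "y $ m \<le> (y + axis j b) $ m"
    using assms by (simp_all add: axis_def)
  then have "y $ m \<le> ?M (y + axis i a)" "y $ m \<le> ?M (y + axis j b)"
    using le_M order_trans by blast+
  moreover have "?M (y + axis i a + axis j b) = (y + axis i a) $ k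
      \<or> ?M (y + axis i a + axis j b) = (y + axis j b) $ k"
    using k \<open>i \<noteq> j\<close> by (auto simp: axis_def)
  ultimately show ?thesis
    using m le_M[of "y + axis i a" k] le_M[of "y + axis j b" k] by linarith
qed

lemma surplus_altdef: "surplus P c \<theta> = (\<integral>e. Max (range (($) (\<theta> + c *\<^sub>R e))) \<partial>P)"
  unfolding surplus_def by simp

lemma integrable_surplus_integrand:
  assumes "assumption1 P"
  shows "integrable P (\<lambda>e. Max (range (($) (\<theta> + c *\<^sub>R e))))"
proof -
  interpret prob_space P using assms by (simp add: assumption1_def)
  have comp: "integrable P (\<lambda>e. (\<theta> + c *\<^sub>R e) $ j)" for j
    using assms by (simp add: assumption1_def)
  have "(\<lambda>e. Max ((\<lambda>j. (\<theta> + c *\<^sub>R e) $ j) ` UNIV)) \<in> borel_measurable P"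
    by (rule borel_measurable_Max) (use comp in auto)
  then show ?thesis
    by (rule Bochner_Integration.integrable_bound
        [OF Bochner_Integration.integrable_sum[OF integrable_abs[OF comp]]])
      (auto intro: abs_Max_range_le_sum[THEN order_trans])
qed

lemma surplus_add_const:
  assumes "assumption1 P"
  shows "surplus P c (\<theta> + (\<chi> i. t)) = surplus P c \<theta> + t"
proof -
  interpret prob_space P using assms by (simp add: assumption1_def)
  have "\<theta> + (\<chi> i. t) + c *\<^sub>R e = (\<theta> + c *\<^sub>R e) + (\<chi> i. t)" for e
    by (simp add: algebra_simps)
  then have "surplus P c (\<theta> + (\<chi> i. t)) = (\<integral>e. Max (range (($) (\<theta> + c *\<^sub>R e))) + t \<partial>P)"
    unfolding surplus_altdef by (simp only: Max_range_vec_add_const)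
  also have "\<dots> = surplus P c \<theta> + t"
    unfolding surplus_altdef
    using integrable_surplus_integrand[OF assms] by (simp add: prob_space)
  finally show ?thesis .
qed

lemma surplus_scale:
  assumes "c > 0"
  shows "surplus P c \<theta> = c * surplus P 1 ((1/c) *\<^sub>R \<theta>)"
proof -
  have "\<theta> + c *\<^sub>R e = c *\<^sub>R ((1/c) *\<^sub>R \<theta> + 1 *\<^sub>R e)" for e
    using assms by (simp add: scaleR_add_right)
  then show ?thesis
    unfolding surplus_altdef using assms by (simp only: Max_range_vec_scaleR) simp
qed

lemma component_le_surplus:
  assumes "assumption1 P"
  shows "\<theta> $ k \<le> surplus P c \<theta>"
proof -
  interpret prob_space P using assms by (simp add: assumption1_def)
  have comp: "integrable P (\<lambda>e. (\<theta> + c *\<^sub>R e) $ k)"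
    using assms by (simp add: assumption1_def)
  have "\<theta> $ k = (\<integral>e. (\<theta> + c *\<^sub>R e) $ k \<partial>P)"
    using assms by (simp add: assumption1_def prob_space)
  also have "\<dots> \<le> surplus P c \<theta>"
    unfolding surplus_altdef
    by (rule integral_mono[OF comp integrable_surplus_integrand[OF assms]]) (simp add: Max_ge)
  finally show ?thesis .
qed

lemma surplus_submodular:
  assumes "assumption1 P" "i \<noteq> j" "a \<ge> 0" "b \<ge> 0"
  shows "surplus P c (\<theta> + axis i a + axis j b) + surplus P c \<theta>
     \<le> surplus P c (\<theta> + axis i a) + surplus P c (\<theta> + axis j b)"
  unfolding surplus_altdef
  using integrable_surplus_integrand[OF assms(1)]
proof (simp only: Bochner_Integration.integral_add[symmetric], intro integral_mono)
  fix e
  show "Max (range (($) (\<theta> + axis i a + axis j b + c *\<^sub>R e))) + Max (range (($) (\<theta> + c *\<^sub>R e)))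
    \<le> Max (range (($) (\<theta> + axis i a + c *\<^sub>R e))) + Max (range (($) (\<theta> + axis j b + c *\<^sub>R e)))"
    using Max_range_vec_submodular[OF assms(2-4), of "\<theta> + c *\<^sub>R e"]
    by (simp only: ac_simps)
qed (intro Bochner_Integration.integrable_add integrable_surplus_integrand[OF assms(1)])+

lemma Sup_prob_simplex_le_surplus:
  fixes \<theta> :: "real^'n"
  assumes "assumption1 P"
  shows "(SUP y\<in>prob_simplex. \<theta> \<bullet> y) \<le> surplus P c \<theta>"
proof (rule cSUP_least)
  have "axis undefined 1 \<in> prob_simplex"
    by (simp add: prob_simplex_def axis_def)
  then show "prob_simplex \<noteq> {}" by blast
next
  fix y :: "real^'n" assume "y \<in> prob_simplex"
  then have nonneg: "\<And>i. 0 \<le> y $ i" and sum1: "(\<Sum>i\<in>UNIV. y $ i) = 1"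
    by (auto simp: prob_simplex_def)
  have "\<theta> \<bullet> y = (\<Sum>i\<in>UNIV. \<theta> $ i * y $ i)" by (simp add: inner_vec_def)
  also have "\<dots> \<le> (\<Sum>i\<in>UNIV. surplus P c \<theta> * y $ i)"
    by (intro sum_mono mult_right_mono component_le_surplus[OF assms] nonneg)
  also have "\<dots> = surplus P c \<theta>" by (simp add: sum_distrib_left[symmetric] sum1)
  finally show "\<theta> \<bullet> y \<le> surplus P c \<theta>" .
qed

lemma scaleR_axis_one: "a *\<^sub>R axis i (1::real) = axis i a"
  by (simp add: vec_eq_iff axis_def)

lemma matrix_vector_mult_axis_component: "((A :: real^'n^'m) *v axis j 1) $ i = A $ i $ j"
  by (simp add: matrix_vector_mult_def axis_def if_distrib cong: if_cong)

lemma has_real_derivative_nonpos_if_right_le: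
  fixes f :: "real \<Rightarrow> real"
  assumes "(f has_real_derivative D) (at x)" and "\<And>h. h > 0 \<Longrightarrow> f (x + h) \<le> f x"
  shows "D \<le> 0"
proof (rule ccontr)
  assume "\<not> D \<le> 0"
  then obtain d where "d > 0" and "\<forall>h > 0. h < d \<longrightarrow> f x < f (x + h)"
    using DERIV_pos_inc_right[OF assms(1)] by auto
  then have "f x < f (x + d/2)" by simp
  with assms(2)[of "d/2"] \<open>d > 0\<close> show False by simp
qed

lemma GDERIV_unique:
  assumes "GDERIV f x :> d" and "GDERIV f x :> d'"
  shows "d = d'"
proof -
  have "(\<lambda>h. h \<bullet> d) = (\<lambda>h. h \<bullet> d')"
    using assms unfolding gderiv_def by (rule has_derivative_unique)
  then have "(d - d') \<bullet> (d - d') = 0" by (metis inner_diff_right right_minus_eq)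
  then show ?thesis by simp
qed

locale gradient_hessian =
  fixes \<phi> :: "real^'n \<Rightarrow> real" and g :: "real^'n \<Rightarrow> real^'n" and H :: "real^'n \<Rightarrow> real^'n^'n"
  assumes gradient: "GDERIV \<phi> y :> g y"
    and hessian: "(g has_derivative (\<lambda>h. H y *v h)) (at y)"
begin

lemma has_real_derivative_along_line:
  "((\<lambda>s. \<phi> (\<theta> + s *\<^sub>R v)) has_real_derivative (v \<bullet> g (\<theta> + s *\<^sub>R v))) (at s)"
proof -
  have "((\<lambda>s. \<theta> + s *\<^sub>R v) has_derivative (\<lambda>s. s *\<^sub>R v)) (at s)"
    by (auto intro!: derivative_eq_intros)
  from has_derivative_compose[OF this gradient[unfolded gderiv_def]]
  show ?thesis by (rule has_derivative_imp_has_field_derivative) simp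
qed

lemma gradient_has_real_derivative_along_line:
  "((\<lambda>s. g (\<theta> + s *\<^sub>R v) \<bullet> w) has_real_derivative ((H (\<theta> + s *\<^sub>R v) *v v) \<bullet> w)) (at s)"
proof -
  have "((\<lambda>s. \<theta> + s *\<^sub>R v) has_derivative (\<lambda>s. s *\<^sub>R v)) (at s)"
    by (auto intro!: derivative_eq_intros)
  from has_derivative_inner_left[OF has_derivative_compose[OF this hessian]]
  show ?thesis
    by (rule has_derivative_imp_has_field_derivative) (simp add: matrix_vector_mult_scaleR)
qed

text \<open>Proved by two monotonicity arguments along the segment from \<open>\<theta>\<close> to \<open>\<theta> + v\<close>,
  which avoids integrating the Hessian.\<close>

lemma Taylor_upper_bound:
  assumes hess: "\<And>y. v \<bullet> (H y *v v) \<le> M"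
  shows "\<phi> (\<theta> + v) - \<phi> \<theta> - v \<bullet> g \<theta> \<le> M / 2"
proof -
  have slope_le: "v \<bullet> g (\<theta> + s *\<^sub>R v) \<le> v \<bullet> g \<theta> + M * s" if "s \<ge> 0" for s
  proof -
    have "g (\<theta> + s *\<^sub>R v) \<bullet> v - M * s \<le> g (\<theta> + 0 *\<^sub>R v) \<bullet> v - M * 0"
    proof (rule DERIV_nonpos_imp_nonincreasing[OF that])
      fix x
      show "\<exists>y. ((\<lambda>s. g (\<theta> + s *\<^sub>R v) \<bullet> v - M * s) has_real_derivative y) (at x) \<and> y \<le> 0"
        using DERIV_diff[OF gradient_has_real_derivative_along_line DERIV_cmult[OF DERIV_ident]]
          hess[of "\<theta> + x *\<^sub>R v"]
        by (force simp: inner_commute)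
    qed
    then show ?thesis by (simp add: inner_commute)
  qed
  define k where "k = (\<lambda>s. \<phi> (\<theta> + s *\<^sub>R v) - s * (v \<bullet> g \<theta>) - M / 2 * s\<^sup>2)"
  have "((\<lambda>s. s * (v \<bullet> g \<theta>)) has_real_derivative (v \<bullet> g \<theta>)) (at s)"
    "((\<lambda>s. M / 2 * s\<^sup>2) has_real_derivative (M * s)) (at s)" for s
    by (auto intro!: derivative_eq_intros)
  then have dk: "(k has_real_derivative (v \<bullet> g (\<theta> + s *\<^sub>R v) - v \<bullet> g \<theta> - M * s)) (at s)" for s
    unfolding k_def by (intro DERIV_diff has_real_derivative_along_line)
  have "k 1 \<le> k 0"
    by (rule DERIV_nonpos_imp_nonincreasing) (use dk slope_le in \<open>force+\<close>)
  then show ?thesis unfolding k_def by simp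
qed

lemma gradient_sum_eq_1:
  assumes shift: "\<And>\<theta> t. \<phi> (\<theta> + (\<chi> i. t)) = \<phi> \<theta> + t"
  shows "(\<Sum>i\<in>UNIV. g \<theta> $ i) = 1"
proof -
  have "(\<lambda>s. \<phi> (\<theta> + s *\<^sub>R (\<chi> i. 1))) = (\<lambda>s. \<phi> \<theta> + s)"
    using shift by (simp add: vec_eq_iff scaleR_vec_def)
  then have "((\<lambda>s. \<phi> \<theta> + s) has_real_derivative ((\<chi> i. 1) \<bullet> g \<theta>)) (at 0)"
    using has_real_derivative_along_line[of \<theta> "\<chi> i. 1" 0] by simp
  moreover have "((\<lambda>s. \<phi> \<theta> + s) has_real_derivative 1) (at 0)"
    by (auto intro!: derivative_eq_intros)
  ultimately show ?thesis by (simp add: DERIV_unique inner_vec_def)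
qed

lemma hessian_column_sum_eq_0:
  assumes shift: "\<And>\<theta> t. \<phi> (\<theta> + (\<chi> i. t)) = \<phi> \<theta> + t"
  shows "(\<Sum>i\<in>UNIV. H \<theta> $ i $ j) = 0"
proof -
  have "(\<lambda>s. g (\<theta> + s *\<^sub>R axis j 1) \<bullet> (\<chi> i. 1)) = (\<lambda>s. 1)"
    using gradient_sum_eq_1[OF shift] by (simp add: inner_vec_def)
  then have "((\<lambda>s. 1) has_real_derivative ((H \<theta> *v axis j 1) \<bullet> (\<chi> i. 1))) (at 0)"
    using gradient_has_real_derivative_along_line[of \<theta> "axis j 1" "\<chi> i. 1" 0] by simp
  then have "(H \<theta> *v axis j 1) \<bullet> (\<chi> i. 1) = 0"
    using DERIV_const DERIV_unique by blast
  then show ?thesis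
    by (simp add: inner_vec_def matrix_vector_mult_axis_component)
qed

context
  assumes submodular: "\<And>\<theta> i j a b. i \<noteq> j \<Longrightarrow> a \<ge> 0 \<Longrightarrow> b \<ge> 0 \<Longrightarrow>
    \<phi> (\<theta> + axis i a + axis j b) + \<phi> \<theta> \<le> \<phi> (\<theta> + axis i a) + \<phi> (\<theta> + axis j b)"
begin

lemma gradient_antimono_off_diag:
  assumes "i \<noteq> j" and "b \<ge> 0"
  shows "g (\<theta> + axis j b) $ i \<le> g \<theta> $ i"
proof -
  define K where "K a = \<phi> (\<theta> + axis j b + a *\<^sub>R axis i 1) - \<phi> (\<theta> + a *\<^sub>R axis i 1)" for a
  have "(K has_real_derivative (axis i 1 \<bullet> g (\<theta> + axis j b) - axis i 1 \<bullet> g \<theta>)) (at 0)"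
    unfolding K_def using has_real_derivative_along_line[of _ "axis i 1" 0]
    by (intro DERIV_diff) simp_all
  moreover have "K (0 + a) \<le> K 0" if "a > 0" for a
    using submodular[OF assms(1), of a b \<theta>] that assms(2)
    by (simp add: K_def scaleR_axis_one axis_eq_0_iff[THEN iffD2] algebra_simps)
  ultimately show ?thesis
    by (auto simp: inner_axis' dest: has_real_derivative_nonpos_if_right_le)
qed

lemma hessian_off_diag_nonpos:
  assumes "i \<noteq> j"
  shows "H \<theta> $ i $ j \<le> 0"
proof (rule has_real_derivative_nonpos_if_right_le)
  show "((\<lambda>b. g (\<theta> + b *\<^sub>R axis j 1) \<bullet> axis i 1) has_real_derivative H \<theta> $ i $ j) (at 0)"
    using gradient_has_real_derivative_along_line[of \<theta> "axis j 1" "axis i 1" 0]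
    by (simp only: inner_axis matrix_vector_mult_axis_component inner_real_def mult_1_right
        scale_zero_left add_0_right)
  show "g (\<theta> + (0 + b) *\<^sub>R axis j 1) \<bullet> axis i 1 \<le> g (\<theta> + 0 *\<^sub>R axis j 1) \<bullet> axis i 1"
    if "b > 0" for b
    using gradient_antimono_off_diag[OF assms, of b \<theta>] that
    by (simp add: inner_axis scaleR_axis_one axis_eq_0_iff[THEN iffD2])
qed

end

end

lemma quadratic_form_le_trace:
  fixes A :: "real^'n^'n" and v :: "real^'n"
  assumes col_sum: "\<And>j. (\<Sum>i\<in>UNIV. A $ i $ j) = 0"
    and off_diag: "\<And>i j. i \<noteq> j \<Longrightarrow> A $ i $ j \<le> 0"
    and bound: "\<And>i. \<bar>v $ i\<bar> \<le> m"
  shows "v \<bullet> (A *v v) \<le> 2 * m\<^sup>2 * trace A"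
proof -
  have m: "m \<ge> 0" using bound[of undefined] by simp
  text \<open>The zero column sums let us subtract \<open>\<Sum>\<^sub>i\<^sub>j A\<^sub>i\<^sub>j v\<^sub>j\<^sup>2 = 0\<close>; afterwards only
    off-diagonal terms survive, each with a nonpositive coefficient.\<close>
  have "(\<Sum>i\<in>UNIV. \<Sum>j\<in>UNIV. A$i$j * (v$j * v$j)) = (\<Sum>j\<in>UNIV. (\<Sum>i\<in>UNIV. A$i$j) * (v$j * v$j))"
    by (subst sum.swap) (simp add: sum_distrib_right)
  then have "v \<bullet> (A *v v) = (\<Sum>i\<in>UNIV. \<Sum>j\<in>UNIV. A$i$j * (v$i * v$j - v$j * v$j))"
    by (simp add: col_sum inner_vec_def matrix_vector_mult_def sum_distrib_left
        right_diff_distrib sum_subtractf mult_ac)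
  also have "\<dots> \<le> (\<Sum>i\<in>UNIV. \<Sum>j\<in>UNIV. (if i = j then 2 * m\<^sup>2 * A$i$i else 0) - 2 * m\<^sup>2 * A$i$j)"
  proof (intro sum_mono)
    fix i j
    show "A$i$j * (v$i * v$j - v$j * v$j) \<le> (if i = j then 2 * m\<^sup>2 * A$i$i else 0) - 2 * m\<^sup>2 * A$i$j"
    proof (cases "i = j")
      case False
      have "\<bar>v$i * v$j\<bar> \<le> m * m" "\<bar>v$j * v$j\<bar> \<le> m * m"
        unfolding abs_mult by (rule mult_mono[OF bound bound m abs_ge_zero])+
      then have "-2 * m\<^sup>2 \<le> v$i * v$j - v$j * v$j" by (simp add: power2_eq_square abs_le_iff)
      from mult_left_mono_neg[OF this off_diag[OF False]] False show ?thesis by (simp add: mult_ac)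
    qed simp
  qed
  also have "\<dots> = 2 * m\<^sup>2 * trace A - 2 * m\<^sup>2 * (\<Sum>i\<in>UNIV. \<Sum>j\<in>UNIV. A$i$j)"
    by (simp add: sum_subtractf sum_distrib_left trace_def)
  also have "(\<Sum>i\<in>UNIV. \<Sum>j\<in>UNIV. A$i$j) = 0"
    by (subst sum.swap) (simp add: col_sum)
  finally show ?thesis by simp
qed

lemma surplus_Taylor_remainder_le:
  assumes "assumption1 P"
    and grad: "\<And>y. GDERIV (surplus P 1) y :> g y"
    and hess: "\<And>y. (g has_derivative (\<lambda>h. H y *v h)) (at y)"
    and trace: "\<And>y. 2 * trace (H y) \<le> L"
    and bound: "\<And>i. \<bar>v $ i\<bar> \<le> m"
  shows "surplus P 1 (\<theta> + v) - surplus P 1 \<theta> - v \<bullet> g \<theta> \<le> L * m\<^sup>2 / 2"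
proof -
  interpret gradient_hessian "surplus P 1" g H using grad hess by unfold_locales
  have "v \<bullet> (H y *v v) \<le> L * m\<^sup>2" for y
  proof -
    have "v \<bullet> (H y *v v) \<le> 2 * m\<^sup>2 * trace (H y)"
    proof (rule quadratic_form_le_trace[OF _ _ bound])
      show "(\<Sum>i\<in>UNIV. H y $ i $ j) = 0" for j
        using surplus_add_const[OF assms(1)] by (rule hessian_column_sum_eq_0)
      show "H y $ i $ j \<le> 0" if "i \<noteq> j" for i j
        using surplus_submodular[OF assms(1)] that by (rule hessian_off_diag_nonpos)
    qed
    also have "\<dots> \<le> L * m\<^sup>2"
      using mult_right_mono[OF trace[of y], of "m\<^sup>2"] by (simp add: ac_simps)
    finally show ?thesis .
  qed
  then show ?thesis by (rule Taylor_upper_bound)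
qed

lemma GDERIV_surplus_scale:
  assumes "\<eta> > 0" and "GDERIV (surplus P 1) ((1/\<eta>) *\<^sub>R \<theta>) :> d"
  shows "GDERIV (surplus P \<eta>) \<theta> :> d"
proof -
  have "((\<lambda>y. (1/\<eta>) *\<^sub>R y) has_derivative (\<lambda>h. (1/\<eta>) *\<^sub>R h)) (at \<theta>)"
    by (auto intro!: derivative_eq_intros)
  from has_derivative_mult_right[OF has_derivative_compose[OF this assms(2)[unfolded gderiv_def]], of \<eta>]
  have "((\<lambda>y. \<eta> * surplus P 1 ((1/\<eta>) *\<^sub>R y)) has_derivative (\<lambda>h. h \<bullet> d)) (at \<theta>)"
    using assms(1) by simp
  moreover have "surplus P \<eta> = (\<lambda>y. \<eta> * surplus P 1 ((1/\<eta>) *\<^sub>R y))"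
    using surplus_scale[OF assms(1)] by blast
  ultimately show ?thesis unfolding gderiv_def by simp
qed

lemma surplus_step_le:
  assumes "assumption1 P" and "assumption2 P L" and "\<eta> > 0"
    and bound: "\<And>i. \<bar>v $ i\<bar> \<le> umax"
    and x: "GDERIV (surplus P \<eta>) \<theta> :> x"
  shows "surplus P \<eta> (\<theta> + v) - surplus P \<eta> \<theta> - v \<bullet> x \<le> L * umax\<^sup>2 / (2 * \<eta>)"
proof -
  obtain g H where grad: "\<And>y. GDERIV (surplus P 1) y :> g y"
    and hess: "\<And>y. (g has_derivative (\<lambda>h. H y *v h)) (at y)"
    and trace: "\<And>y. 2 * trace (H y) \<le> L"
    using assms(2) unfolding assumption2_def by blast
  define \<theta>' v' where "\<theta>' = (1/\<eta>) *\<^sub>R \<theta>" and "v' = (1/\<eta>) *\<^sub>R v"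
  have "x = g \<theta>'"
    unfolding \<theta>'_def by (rule GDERIV_unique[OF x GDERIV_surplus_scale[OF assms(3) grad]])
  then have "surplus P \<eta> (\<theta> + v) - surplus P \<eta> \<theta> - v \<bullet> x
      = \<eta> * (surplus P 1 (\<theta>' + v') - surplus P 1 \<theta>' - v' \<bullet> g \<theta>')"
    unfolding surplus_scale[OF assms(3)] \<theta>'_def v'_def
    using assms(3) by (simp add: scaleR_add_right algebra_simps)
  also have "\<dots> \<le> \<eta> * (L * (umax / \<eta>)\<^sup>2 / 2)"
  proof (intro mult_left_mono surplus_Taylor_remainder_le[OF assms(1) grad hess trace])
    show "\<bar>v' $ i\<bar> \<le> umax / \<eta>" for i
      using bound[of i] assms(3) by (simp add: v'_def abs_mult divide_simps)
  qed (use assms(3) in simp)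
  also have "\<dots> = L * umax\<^sup>2 / (2 * \<eta>)"
    using assms(3) by (simp add: power2_eq_square field_simps)
  finally show ?thesis .
qed

lemma regret_SSA_le:
  assumes "assumption1 P" and "assumption2 P L" and "\<eta> > 0"
    and bound: "\<forall>t\<in>{1..T}. \<forall>i. \<bar>u t $ i\<bar> \<le> umax"
    and SSA: "\<forall>t\<in>{1..T}. GDERIV (surplus P \<eta>) (cumpay u (t - 1)) :> x t"
  shows "regret u x T \<le> \<eta> * surplus P 1 0 + L / (2 * \<eta>) * real T * umax\<^sup>2"
proof -
  let ?\<Phi> = "\<lambda>t. surplus P \<eta> (cumpay u t)"
  have step: "?\<Phi> t - ?\<Phi> (t - 1) \<le> u t \<bullet> x t + L * umax\<^sup>2 / (2 * \<eta>)" if "t \<in> {1..T}" for t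
  proof -
    have "cumpay u t = cumpay u (t - 1) + u t"
      using that by (cases t) (auto simp: cumpay_def sum.cl_ivl_Suc)
    then show ?thesis
      using surplus_step_le[OF assms(1-3), of "u t" umax "cumpay u (t - 1)" "x t"] bound SSA that
      by simp
  qed
  have telescope: "?\<Phi> n = ?\<Phi> 0 + (\<Sum>t=1..n. ?\<Phi> t - ?\<Phi> (t - 1))" for n
    by (induction n) (auto simp: sum.cl_ivl_Suc)
  have "(SUP y\<in>prob_simplex. cumpay u T \<bullet> y) \<le> ?\<Phi> T"
    by (rule Sup_prob_simplex_le_surplus[OF assms(1)])
  also have "\<dots> \<le> ?\<Phi> 0 + (\<Sum>t=1..T. u t \<bullet> x t + L * umax\<^sup>2 / (2 * \<eta>))"
    unfolding telescope[of T] using step by (intro add_left_mono sum_mono) auto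
  also have "\<dots> = \<eta> * surplus P 1 0 + (\<Sum>t=1..T. u t \<bullet> x t) + L / (2 * \<eta>) * real T * umax\<^sup>2"
    using surplus_scale[OF assms(3), of P 0] by (simp add: cumpay_def sum.distrib)
  finally show ?thesis unfolding regret_def by simp
qed

lemma balanced_sum_at_sqrt:
  fixes a B \<eta> :: real
  assumes "a > 0" and "B \<ge> 0" and "\<eta> = sqrt (B / (2 * a))"
  shows "\<eta> * a + B / (2 * \<eta>) = sqrt (2 * a * B)"
proof (cases "B = 0")
  case False
  then have "\<eta> > 0" and B: "B = 2 * a * \<eta>\<^sup>2"
    using assms by simp_all
  then have "\<eta> * a + B / (2 * \<eta>) = 2 * a * \<eta>"
    by (simp add: power2_eq_square field_simps)
  also have "\<dots> = sqrt (2 * a * B)"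
    using \<open>\<eta> > 0\<close> assms(1) unfolding B
    by (simp add: real_sqrt_mult power2_eq_square real_sqrt_mult_self)
  finally show ?thesis .
qed (use assms in simp)

theorem theorem1:
  fixes P :: "(real^'n) measure" and L \<eta> umax :: real and T :: nat
    and u x :: "nat \<Rightarrow> real^'n"
  assumes "CARD('n) \<ge> 2"
    and "assumption1 P"
    and "assumption2 P L"
    and "\<eta> > 0"
    and "T \<ge> 1"
    and "\<forall>t\<in>{1..T}. \<forall>i. \<bar>u t $ i\<bar> \<le> umax"
    and "\<forall>t\<in>{1..T}. GDERIV (surplus P \<eta>) (cumpay u (t - 1)) :> x t"
  shows "regret u x T \<le> \<eta> * surplus P 1 0 + L / (2 * \<eta>) * real T * umax\<^sup>2
    \<and> (surplus P 1 0 > 0 \<and> \<eta> = sqrt (L * real T * umax\<^sup>2 / (2 * surplus P 1 0))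
        \<longrightarrow> regret u x T \<le> umax * sqrt (2 * surplus P 1 0 * L * real T))"
proof -
  note regret = regret_SSA_le[OF assms(2-4,6,7)]
  have "umax \<ge> 0"
    using assms(5,6) by (meson abs_ge_zero atLeastAtMost_iff order_trans order_refl)
  moreover have "L > 0"
    using assms(3) by (simp add: assumption2_def)
  ultimately have balanced: "\<eta> * a + L / (2 * \<eta>) * real T * umax\<^sup>2 = umax * sqrt (2 * a * L * real T)"
    if "a > 0" and "\<eta> = sqrt (L * real T * umax\<^sup>2 / (2 * a))" for a
    using balanced_sum_at_sqrt[OF that(1) _ that(2)] by (simp add: real_sqrt_mult mult_ac)
  show ?thesis
    using regret balanced[of "surplus P 1 0"] by auto
qed

end
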